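(* Fix $x_0\in\mathbb{R}^{n_x}$. There exist a finite positive constant $\alpha_1'(x_0)$ and, for each $i\in\{2,\dots,T+1\}$, a finite set $\mathcal{K}_i'$ of sequences of non-negative integers of length $i-1$ and finite positive constants $\alpha_i'^{(j_1,\dots,j_{i-1})}(x_0)$ (depending on $x_0$ and $(j_1,\dots,j_{i-1})$ but not on the observations or the control) such that for every $u\in U$ and every $(y_1,\dots,y_T)$, the trajectory $x$ of the hybrid system starting at $x_0$ satisfies: $|c(x_1(t),u(t))|\le\alpha_1'(x_0)$ for all $t\in[0,1]$; for all $i\in\{2,\dots,T\}$ and $t\in[i-1,i]$, $$|c(x_i(t),u(t))|\le\sum_{(j_1,\dots,j_{i-1})\in\mathcal{K}_i'}\alpha_i'^{(j_1,\dots,j_{i-1})}(x_0)\prod_{m=1}^{i-1}\|y_m\|_2^{j_m};$$ and $$|h(x(T))|\le\sum_{(j_1,\dots,j_T)\in\mathcal{K}_{T+1}'}\alpha_{T+1}'^{(j_1,\dots,j_T)}(x_0)\prod_{m=1}^{T}\|y_m\|_2^{j_m}.$$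
   Context: Fix positive integers $T,m,n_x,n_y$ and $\rho_{\max}\in(0,\infty)$; $B(0,\rho_{\max})$ is the closed Euclidean ball of radius $\rho_{\max}$ in $\mathbb{R}^m$; $U$ is the set of piecewise continuous $u:[0,T]\to\mathbb{R}^m$ with $\|u(t)\|_2\le\rho_{\max}$ for all $t$. $f:\mathbb{R}^{n_x}\times\mathbb{R}^m\to\mathbb{R}^{n_x}$ is continuously differentiable and there is $K_1\in[1,\infty)$ with $\|f(x',u')-f(x'',u'')\|_2\le K_1(\|x'-x''\|_2+\|u'-u''\|_2)$ for all $x',x''$ and $u',u''\in B(0,\rho_{\max})$. $g:\mathbb{R}^{n_x}\times\mathbb{R}^{n_y}\to\mathbb{R}^{n_x}$ is continuous and differentiable in its first argument, and there are $K_2,\dots,K_5\ge0$ and positive integers $L_1,L_2$ such that for all $x,y$ both $\|g(x,y)\|_2$ and $\|\frac{\partial}{\partial x}g(x,y)\|_2$ are at most $K_2+K_3\|x\|_2^{L_1}+K_4\|y\|_2^{L_2}+K_5\|x\|_2^{L_1}\|y\|_2^{L_2}$. The hybrid system: $x_1$ on $[0,1]$ solves $\dot x_1=f(x_1,u)$, $x_1(0)=x_0$; for $i=2,\dots,T$, $x_i$ on $[i-1,i]$ solves $\dot x_i=f(x_i,u)$ with $x_i(i-1)=g(x_{i-1}(i-1),y_{i-1})$; $x(t)=x_i(t)$ for $t\in[i-1,i)$, and $x(T)=g(x_T(T),y_T)$. Costs: $c:\mathbb{R}^{n_x}\times\mathbb{R}^m\to\mathbb{R}$ is continuous and continuously differentiable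 in $x$, $h:\mathbb{R}^{n_x}\to\mathbb{R}$ is differentiable, and there are $K_6,K_7\ge0$ and a positive integer $L_3$ such that $|c(x,u)|$, $\|\frac{\partial}{\partial x}c(x,u)\|_2$, $|h(x)|$, $\|\frac{\partial}{\partial x}h(x)\|_2$ are all at most $K_6+K_7\|x\|_2^{L_3}$ for all $x$ and $u\in B(0,\rho_{\max})$. *)

theory Defs
  imports "HOL-Analysis.Analysis"
begin

definition piecewise_continuous_on :: "real \<Rightarrow> real \<Rightarrow> (real \<Rightarrow> 'a::real_normed_vector) \<Rightarrow> bool" where
  "piecewise_continuous_on a b u \<longleftrightarrow>
     (\<exists>S. finite S \<and> S \<subseteq> {a..b} \<and>
        (\<forall>t\<in>{a..b} - S. continuous (at t within {a..b}) u) \<and>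
        (\<forall>s\<in>S. (s > a \<longrightarrow> (\<exists>l. (u \<longlongrightarrow> l) (at_left s))) \<and>
                 (s < b \<longrightarrow> (\<exists>l. (u \<longlongrightarrow> l) (at_right s)))))"

definition admissible_controls :: "nat \<Rightarrow> real \<Rightarrow> (real \<Rightarrow> 'u::real_normed_vector) set" where
  "admissible_controls T \<rho> =
     {u. piecewise_continuous_on 0 (real T) u \<and> (\<forall>t\<in>{0..real T}. norm (u t) \<le> \<rho>)}"

definition hybrid_init :: "('x \<Rightarrow> 'y \<Rightarrow> 'x) \<Rightarrow> 'x \<Rightarrow> (nat \<Rightarrow> 'y) \<Rightarrow> (nat \<Rightarrow> real \<Rightarrow> 'x) \<Rightarrow> nat \<Rightarrow> 'x" where
  "hybrid_init g x0 y xs i =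
     (if i = 1 then x0 else g (xs (i - 1) (real (i - 1))) (y (i - 1)))"

text \<open>xs i is the i-th arc x_i on [i-1,i], a (Caratheodory) solution of
  dx_i/dt = f(x_i,u) with the hybrid initial conditions, i = 1..T.\<close>
definition hybrid_trajectory ::
  "('x::euclidean_space \<Rightarrow> 'u::euclidean_space \<Rightarrow> 'x) \<Rightarrow> ('x \<Rightarrow> 'y \<Rightarrow> 'x) \<Rightarrow> nat \<Rightarrow> 'x
     \<Rightarrow> (real \<Rightarrow> 'u) \<Rightarrow> (nat \<Rightarrow> 'y) \<Rightarrow> (nat \<Rightarrow> real \<Rightarrow> 'x) \<Rightarrow> bool" where
  "hybrid_trajectory f g T x0 u y xs \<longleftrightarrow>
     (\<forall>i\<in>{1..T}. continuous_on {real i - 1..real i} (xs i) \<and>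
        (\<forall>t\<in>{real i - 1..real i}.
           ((\<lambda>s. f (xs i s) (u s)) has_integral (xs i t - hybrid_init g x0 y xs i)) {real i - 1..t}))"

end

theory Submission
  imports Defs
begin

(* Each arc x_i solves an integral equation over an interval of length 1 whose integrand grows at
   most affinely in the state (f is Lipschitz and the control is bounded), so Gronwall's inequality
   gives |x_i(t)| <= (|x_i(i - 1)| + a0) e^a1.  The jump map g grows polynomially in (x, y), hence by
   induction over the arcs |x_i(i - 1)| <= C_i (1 + |y_1| + ... + |y_(i-1)|)^D_i, and the polynomial
   growth of c and h carries such bounds over to the costs.  Finally
   (1 + r_1 + ... + r_n)^P <= (n + 1)^P max(1, r_1, ..., r_n)^P, and the last factor is one of the
   n + 1 monomials 1, r_1^P, ..., r_n^P. *)

lemma gronwall_integral_inequality: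
  fixes \<phi> :: "real \<Rightarrow> real"
  assumes cont: "continuous_on {a..b} \<phi>" and K: "K \<ge> 0"
    and le: "\<And>s. s \<in> {a..b} \<Longrightarrow> \<phi> s \<le> c + K * integral {a..s} \<phi>"
    and t: "t \<in> {a..b}"
  shows "\<phi> t \<le> c * exp (K * (t - a))"
proof -
  define \<Phi> where "\<Phi> s = c + K * integral {a..s} \<phi>" for s
  define w where "w = (\<lambda>s. exp (- (K * (s - a))) * \<Phi> s)"
  have w_deriv: "(w has_real_derivative exp (- (K * (s - a))) * K * (\<phi> s - \<Phi> s)) (at s within {a..b})"
    if "s \<in> {a..b}" for s
  proof -
    have "((\<lambda>s. exp (- (K * (s - a)))) has_real_derivative exp (- (K * (s - a))) * (- K)) (at s within {a..b})"
      by (auto intro!: derivative_eq_intros)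
    moreover have "(\<Phi> has_real_derivative K * \<phi> s) (at s within {a..b})"
      unfolding \<Phi>_def using integral_has_real_derivative[OF cont that] by (auto intro!: derivative_eq_intros)
    ultimately have "(w has_real_derivative exp (- (K * (s - a))) * (- K) * \<Phi> s + K * \<phi> s * exp (- (K * (s - a))))
        (at s within {a..b})"
      unfolding w_def by (rule DERIV_mult)
    then show ?thesis by (rule DERIV_cong) (simp add: algebra_simps)
  qed
  have "w t \<le> w a"
  proof (rule DERIV_nonpos_imp_decreasing_open[of a t w])
    show "a \<le> t" using t by simp
    have "continuous_on {a..b} w" by (rule DERIV_continuous_on) (rule w_deriv)
    then show "continuous_on {a..t} w" by (rule continuous_on_subset) (use t in auto)
  next
    fix s assume s: "a < s" "s < t"
    then have "at s within {a..b} = at s" using t by (intro at_within_Icc_at) auto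
    moreover have "exp (- (K * (s - a))) * K * (\<phi> s - \<Phi> s) \<le> 0"
      using le[of s] s t K by (intro mult_nonneg_nonpos) (auto simp: \<Phi>_def)
    ultimately show "\<exists>y. (w has_real_derivative y) (at s) \<and> y \<le> 0"
      using w_deriv[of s] s t by auto
  qed
  have "\<Phi> t = exp (K * (t - a)) * w t"
    by (simp add: w_def mult.assoc[symmetric] exp_minus_inverse)
  also have "\<dots> \<le> exp (K * (t - a)) * c"
    using \<open>w t \<le> w a\<close> by (intro mult_left_mono) (simp_all add: w_def \<Phi>_def)
  finally show ?thesis
    using le[OF t] mult.commute[of c "exp (K * (t - a))"] unfolding \<Phi>_def by linarith
qed

lemma integral_equation_norm_bound:
  fixes x F :: "real \<Rightarrow> 'a::banach"
  assumes cont: "continuous_on {a..b} x"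
    and sol: "\<And>t. t \<in> {a..b} \<Longrightarrow> (F has_integral (x t - z)) {a..t}"
    and growth: "\<And>s. s \<in> {a..b} \<Longrightarrow> norm (F s) \<le> A + K * norm (x s)"
    and A: "A \<ge> 0" and K: "K \<ge> 0" and t: "t \<in> {a..b}"
  shows "norm (x t) \<le> (norm z + A * (b - a)) * exp (K * (t - a))"
proof (rule gronwall_integral_inequality[OF _ K _ t])
  show cont_norm: "continuous_on {a..b} (\<lambda>s. norm (x s))"
    using cont by (intro continuous_intros)
  fix s assume s: "s \<in> {a..b}"
  have sub: "{a..s} \<subseteq> {a..b}" using s by auto
  have lin: "((\<lambda>r. A + K * norm (x r)) has_integral (A * (s - a) + K * integral {a..s} (\<lambda>r. norm (x r)))) {a..s}"
    using s continuous_on_subset[OF cont_norm sub]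
    by (intro has_integral_add has_integral_mult_right integrable_integral integrable_continuous_interval)
      (use has_integral_const_real[of A a s] in \<open>auto simp: mult.commute\<close>)
  have "norm (x s - z) = norm (integral {a..s} F)"
    using sol[OF s] by (simp add: integral_unique)
  also have "\<dots> \<le> integral {a..s} (\<lambda>r. A + K * norm (x r))"
    using sol[OF s] lin growth sub by (intro integral_norm_bound_integral) (auto simp: has_integral_integrable)
  also have "\<dots> = A * (s - a) + K * integral {a..s} (\<lambda>r. norm (x r))"
    using lin by (rule integral_unique)
  also have "A * (s - a) \<le> A * (b - a)"
    using A s by (intro mult_left_mono) auto
  finally show "norm (x s) \<le> norm z + A * (b - a) + K * integral {a..s} (\<lambda>r. norm (x r))"
    using norm_triangle_sub[of "x s" z] by (simp add: add.commute)
qed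

lemma lipschitz_imp_linear_growth:
  fixes f :: "'x::real_normed_vector \<Rightarrow> 'u::real_normed_vector \<Rightarrow> 'z::real_normed_vector"
  assumes lip: "\<And>x' x'' u' u''. norm u' \<le> \<rho> \<Longrightarrow> norm u'' \<le> \<rho> \<Longrightarrow>
                 norm (f x' u' - f x'' u'') \<le> K * (norm (x' - x'') + norm (u' - u''))"
    and K: "K \<ge> 0" and \<rho>: "\<rho> \<ge> 0" and v: "norm v \<le> \<rho>"
  shows "norm (f x v) \<le> (norm (f 0 0) + K * \<rho>) + K * norm x"
proof -
  have "norm (f x v) \<le> norm (f 0 0) + norm (f x v - f 0 0)"
    by (metis norm_triangle_sub)
  also have "norm (f x v - f 0 0) \<le> K * (norm x + norm v)"
    using lip[OF v, of 0 x 0] \<rho> by simp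
  also have "\<dots> \<le> K * (norm x + \<rho>)"
    using v K by (intro mult_left_mono) auto
  finally show ?thesis by (simp add: algebra_simps)
qed

lemma growth_bound_le_scaled_power:
  fixes c0 c1 :: real
  assumes c: "c0 \<ge> 0" "c1 \<ge> 0" and v: "0 \<le> v" "v \<le> Z * R" and Z: "Z \<ge> 0" and R: "R \<ge> 1"
  shows "c0 + c1 * v ^ L \<le> (c0 + c1 * Z ^ L + 1) * R ^ L"
proof -
  have "v ^ L \<le> Z ^ L * R ^ L"
    using v by (metis power_mono power_mult_distrib)
  then have "c1 * v ^ L \<le> c1 * Z ^ L * R ^ L"
    using c by (simp add: mult_left_mono mult.assoc)
  moreover have "1 \<le> R ^ L" using R by simp
  ultimately have "c0 * 1 + c1 * v ^ L + 0 \<le> c0 * R ^ L + c1 * Z ^ L * R ^ L + 1 * R ^ L"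
    using c by (intro add_mono mult_left_mono) auto
  then show ?thesis by (simp add: algebra_simps)
qed

lemma growth_bound2_le_scaled_powers:
  fixes c0 c1 c2 c3 :: real
  assumes c: "c0 \<ge> 0" "c1 \<ge> 0" "c2 \<ge> 0" "c3 \<ge> 0"
    and a: "0 \<le> a" "a \<le> X" and b: "0 \<le> b" "b \<le> Y" and XY: "1 \<le> X" "1 \<le> Y"
  shows "c0 + c1 * a ^ p + c2 * b ^ q + c3 * a ^ p * b ^ q \<le> (c0 + c1 + c2 + c3) * X ^ p * Y ^ q"
proof -
  have pow: "a ^ p \<le> X ^ p" "b ^ q \<le> Y ^ q" "1 \<le> X ^ p" "1 \<le> Y ^ q"
    using a b XY by (auto intro: power_mono)
  have XP: "X ^ p \<le> X ^ p * Y ^ q" and YP: "Y ^ q \<le> X ^ p * Y ^ q"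
    using pow XY by (simp_all add: mult_le_cancel_left1 mult_le_cancel_right1)
  have "a ^ p * b ^ q \<le> X ^ p * Y ^ q"
    using pow a b by (intro mult_mono) auto
  moreover have "1 \<le> X ^ p * Y ^ q" "a ^ p \<le> X ^ p * Y ^ q" "b ^ q \<le> X ^ p * Y ^ q"
    using pow XP YP by linarith+
  ultimately have "c0 * 1 + c1 * a ^ p + c2 * b ^ q + c3 * (a ^ p * b ^ q) \<le>
      c0 * (X ^ p * Y ^ q) + c1 * (X ^ p * Y ^ q) + c2 * (X ^ p * Y ^ q) + c3 * (X ^ p * Y ^ q)"
    using c by (intro add_mono mult_left_mono) auto
  then show ?thesis by (simp add: algebra_simps)
qed

(* Exponent vectors of the monomials 1, r_1^P, ..., r_n^P; list position m - 1 holds the exponent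
   of r_m. *)
definition single_power_exponents :: "nat \<Rightarrow> nat \<Rightarrow> nat list set" where
  "single_power_exponents n P = insert (replicate n 0) ((\<lambda>m. (replicate n 0)[m := P]) ` {..<n})"

lemma finite_single_power_exponents: "finite (single_power_exponents n P)"
  by (simp add: single_power_exponents_def)

lemma length_single_power_exponents: "js \<in> single_power_exponents n P \<Longrightarrow> length js = n"
  by (auto simp: single_power_exponents_def)

lemma obtain_single_power_exponent:
  assumes "M \<in> insert 1 (r ` {1..n})"
  obtains js where "js \<in> single_power_exponents n P" "M ^ P = (\<Prod>m=1..n. r m ^ (js ! (m - 1)))"
  using assms
proof
  assume "M = 1"
  then show ?thesis
    by (intro that[of "replicate n 0"]) (auto simp: single_power_exponents_def intro!: prod.neutral)
next
  assume "M \<in> r ` {1..n}"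
  then obtain m0 where m0: "m0 \<in> {1..n}" "M = r m0" by auto
  have "(\<Prod>m=1..n. r m ^ ((replicate n 0)[m0 - 1 := P] ! (m - 1))) = (\<Prod>m=1..n. if m = m0 then r m ^ P else 1)"
    using m0 by (intro prod.cong) (auto simp: nth_list_update)
  also have "\<dots> = M ^ P" using m0 by simp
  finally show ?thesis
    using m0 by (intro that[of "(replicate n 0)[m0 - 1 := P]"]) (auto simp: single_power_exponents_def)
qed

lemma power_one_plus_sum_le_monomials:
  fixes r :: "nat \<Rightarrow> real"
  assumes r: "\<And>m. r m \<ge> 0" and B: "B \<ge> 0"
  shows "B * (1 + (\<Sum>m=1..n. r m)) ^ P \<le>
    (\<Sum>js\<in>single_power_exponents n P. B * (real n + 1) ^ P * (\<Prod>m=1..n. r m ^ (js ! (m - 1))))"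
proof -
  define M where "M = Max (insert 1 (r ` {1..n}))"
  have "(\<Sum>m=1..n. r m) \<le> (\<Sum>m=1..n. M)"
    unfolding M_def by (intro sum_mono Max_ge) auto
  moreover have "1 \<le> M" by (simp add: M_def)
  ultimately have "1 + (\<Sum>m=1..n. r m) \<le> (real n + 1) * M" by (simp add: algebra_simps)
  then have "(1 + (\<Sum>m=1..n. r m)) ^ P \<le> (real n + 1) ^ P * M ^ P"
    by (metis power_mono power_mult_distrib r sum_nonneg add_nonneg_nonneg zero_le_one)
  also have "M ^ P \<le> (\<Sum>js\<in>single_power_exponents n P. \<Prod>m=1..n. r m ^ (js ! (m - 1)))"
  proof -
    have "M \<in> insert 1 (r ` {1..n})" unfolding M_def by (intro Max_in) auto
    then obtain js where "js \<in> single_power_exponents n P" "M ^ P = (\<Prod>m=1..n. r m ^ (js ! (m - 1)))"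
      by (rule obtain_single_power_exponent)
    then show ?thesis
      using r by (auto intro!: member_le_sum prod_nonneg simp: finite_single_power_exponents)
  qed
  finally have "(1 + (\<Sum>m=1..n. r m)) ^ P \<le>
      (\<Sum>js\<in>single_power_exponents n P. (real n + 1) ^ P * (\<Prod>m=1..n. r m ^ (js ! (m - 1))))"
    using r by (simp add: sum_distrib_left)
  from mult_left_mono[OF this B] show ?thesis
    by (simp add: sum_distrib_left mult.assoc)
qed

locale hybrid_growth =
  fixes f :: "'x::euclidean_space \<Rightarrow> 'u::euclidean_space \<Rightarrow> 'x"
    and g :: "'x \<Rightarrow> 'y::real_normed_vector \<Rightarrow> 'x"
    and \<rho> a0 a1 K2 K3 K4 K5 :: real and L1 L2 :: nat
  assumes f_growth: "\<And>x v. norm v \<le> \<rho> \<Longrightarrow> norm (f x v) \<le> a0 + a1 * norm x"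
    and a0_nonneg: "a0 \<ge> 0" and a1_nonneg: "a1 \<ge> 0"
    and K2345_nonneg: "K2 \<ge> 0" "K3 \<ge> 0" "K4 \<ge> 0" "K5 \<ge> 0"
    and g_growth: "\<And>x w. norm (g x w) \<le> K2 + K3 * norm x ^ L1 + K4 * norm w ^ L2 + K5 * norm x ^ L1 * norm w ^ L2"
begin

lemma arc_norm_le:
  assumes u: "u \<in> admissible_controls T \<rho>"
    and traj: "hybrid_trajectory f g T x0 u y xs"
    and i: "i \<in> {1..T}" and t: "t \<in> {real i - 1..real i}"
  shows "norm (xs i t) \<le> (norm (hybrid_init g x0 y xs i) + a0) * exp a1"
proof -
  have u_bound: "norm (u s) \<le> \<rho>" if "s \<in> {real i - 1..real i}" for s
    using u that i by (auto simp: admissible_controls_def)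
  have "norm (xs i t) \<le> (norm (hybrid_init g x0 y xs i) + a0 * (real i - (real i - 1))) * exp (a1 * (t - (real i - 1)))"
    using traj i by (intro integral_equation_norm_bound[OF _ _ f_growth[OF u_bound] a0_nonneg a1_nonneg t])
      (auto simp: hybrid_trajectory_def)
  also have "\<dots> = (norm (hybrid_init g x0 y xs i) + a0) * exp (a1 * (t - (real i - 1)))"
    by simp
  also have "\<dots> \<le> (norm (hybrid_init g x0 y xs i) + a0) * exp a1"
    using t a0_nonneg a1_nonneg by (intro mult_left_mono) (auto simp: mult_left_le)
  finally show ?thesis .
qed

lemma arc_poly_bound:
  assumes u: "u \<in> admissible_controls T \<rho>"
    and traj: "hybrid_trajectory f g T x0 u y xs"
    and i: "i \<in> {1..T}" and t: "t \<in> {real i - 1..real i}"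
    and init: "norm (hybrid_init g x0 y xs i) \<le> C * R" and R: "R \<ge> 1"
  shows "norm (xs i t) \<le> exp a1 * (C + a0) * R"
proof -
  have "norm (xs i t) \<le> (norm (hybrid_init g x0 y xs i) + a0) * exp a1"
    by (rule arc_norm_le[OF u traj i t])
  also have "\<dots> \<le> (C * R + a0 * R) * exp a1"
    using init a0_nonneg R mult_left_mono[OF R a0_nonneg] by (intro mult_right_mono add_mono) auto
  finally show ?thesis by (simp add: algebra_simps)
qed

lemma init_poly_bound_Suc:
  assumes u: "u \<in> admissible_controls T \<rho>" and traj: "hybrid_trajectory f g T x0 u y xs"
    and i: "i \<in> {1..T}" and C: "C \<ge> 0"
    and init: "norm (hybrid_init g x0 y xs i) \<le> C * (1 + (\<Sum>m=1..i-1. norm (y m))) ^ D"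
  shows "norm (hybrid_init g x0 y xs (Suc i)) \<le>
    (K2 + K3 + K4 + K5) * (exp a1 * (C + a0) + 1) ^ L1 * (1 + (\<Sum>m=1..i. norm (y m))) ^ (D * L1 + L2)"
proof -
  define Z where "Z = exp a1 * (C + a0) + 1"
  define R where "R = 1 + (\<Sum>m=1..i-1. norm (y m))"
  have Z: "Z \<ge> 1" using a0_nonneg C by (simp add: Z_def)
  have R: "R \<ge> 1" by (simp add: R_def sum_nonneg)
  have R_Suc: "1 + (\<Sum>m=1..i. norm (y m)) = R + norm (y i)"
    using i by (cases i) (simp_all add: R_def sum.cl_ivl_Suc)
  have "norm (xs i (real i)) \<le> exp a1 * (C + a0) * R ^ D"
    using init R by (intro arc_poly_bound[OF u traj i]) (auto simp: R_def)
  also have "\<dots> \<le> Z * R ^ D" using R by (simp add: Z_def)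
  finally have x_end: "norm (xs i (real i)) \<le> Z * R ^ D" .
  have ZR: "1 \<le> Z * R ^ D" using mult_mono[of 1 Z 1 "R ^ D"] Z R by simp
  have R_y: "1 \<le> R + norm (y i)" using R norm_ge_zero[of "y i"] by linarith
  have "hybrid_init g x0 y xs (Suc i) = g (xs i (real i)) (y i)"
    using i by (simp add: hybrid_init_def)
  then have "norm (hybrid_init g x0 y xs (Suc i)) \<le> (K2 + K3 + K4 + K5) * (Z * R ^ D) ^ L1 * (R + norm (y i)) ^ L2"
    using g_growth[of "xs i (real i)" "y i"] x_end ZR R_y R
    by (auto intro!: order_trans[OF _ growth_bound2_le_scaled_powers[OF K2345_nonneg]])
  also have "\<dots> \<le> (K2 + K3 + K4 + K5) * (Z ^ L1 * (R + norm (y i)) ^ (D * L1)) * (R + norm (y i)) ^ L2"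
    using K2345_nonneg R Z
    by (intro mult_right_mono mult_left_mono)
      (auto simp: power_mult_distrib power_mult[symmetric] intro!: power_mono)
  also have "\<dots> = (K2 + K3 + K4 + K5) * Z ^ L1 * (1 + (\<Sum>m=1..i. norm (y m))) ^ (D * L1 + L2)"
    unfolding R_Suc by (simp add: power_add algebra_simps)
  finally show ?thesis unfolding Z_def .
qed

lemma init_poly_bound:
  assumes "i \<in> {1..T+1}"
  shows "\<exists>C D. C \<ge> 0 \<and> (\<forall>u\<in>admissible_controls T \<rho>. \<forall>y xs. hybrid_trajectory f g T x0 u y xs \<longrightarrow>
            norm (hybrid_init g x0 y xs i) \<le> C * (1 + (\<Sum>m=1..i-1. norm (y m))) ^ D)"
  using assms
proof (induction i)
  case 0
  then show ?case by simp
next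
  case (Suc i)
  show ?case
  proof (cases "i = 0")
    case True
    then show ?thesis by (intro exI[of _ "norm x0"] exI[of _ 0]) (auto simp: hybrid_init_def)
  next
    case False
    then have i: "i \<in> {1..T}" using Suc.prems by auto
    then have "i \<in> {1..T+1}" by simp
    with Suc.IH obtain C D where C: "C \<ge> 0" and init: "\<And>u y xs. u \<in> admissible_controls T \<rho> \<Longrightarrow>
        hybrid_trajectory f g T x0 u y xs \<Longrightarrow>
        norm (hybrid_init g x0 y xs i) \<le> C * (1 + (\<Sum>m=1..i-1. norm (y m))) ^ D" by blast
    show ?thesis
      using init_poly_bound_Suc[OF _ _ i C init] C a0_nonneg K2345_nonneg
      by (intro exI[of _ "(K2 + K3 + K4 + K5) * (exp a1 * (C + a0) + 1) ^ L1"] exI[of _ "D * L1 + L2"]) simp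
  qed
qed

lemma init_poly_bounds:
  obtains C D where "\<And>i. i \<in> {1..T+1} \<Longrightarrow> C i \<ge> 0"
    and "\<And>i u y xs. i \<in> {1..T+1} \<Longrightarrow> u \<in> admissible_controls T \<rho> \<Longrightarrow> hybrid_trajectory f g T x0 u y xs \<Longrightarrow>
      norm (hybrid_init g x0 y xs i) \<le> C i * (1 + (\<Sum>m=1..i-1. norm (y m))) ^ D i"
proof -
  have "\<forall>i\<in>{1..T+1}. \<exists>C D. C \<ge> 0 \<and> (\<forall>u\<in>admissible_controls T \<rho>. \<forall>y xs.
      hybrid_trajectory f g T x0 u y xs \<longrightarrow>
      norm (hybrid_init g x0 y xs i) \<le> C * (1 + (\<Sum>m=1..i-1. norm (y m))) ^ D)"
    using init_poly_bound by blast
  then obtain C where "\<forall>i\<in>{1..T+1}. \<exists>D. C i \<ge> 0 \<and> (\<forall>u\<in>admissible_controls T \<rho>. \<forall>y xs.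
      hybrid_trajectory f g T x0 u y xs \<longrightarrow>
      norm (hybrid_init g x0 y xs i) \<le> C i * (1 + (\<Sum>m=1..i-1. norm (y m))) ^ D)"
    by (rule bchoice[THEN exE])
  then obtain D where "\<forall>i\<in>{1..T+1}. C i \<ge> 0 \<and> (\<forall>u\<in>admissible_controls T \<rho>. \<forall>y xs.
      hybrid_trajectory f g T x0 u y xs \<longrightarrow>
      norm (hybrid_init g x0 y xs i) \<le> C i * (1 + (\<Sum>m=1..i-1. norm (y m))) ^ D i)"
    by (rule bchoice[THEN exE])
  then show ?thesis by (intro that[of C D]) auto
qed

end

locale hybrid_cost_growth = hybrid_growth f g \<rho> a0 a1 K2 K3 K4 K5 L1 L2
  for f :: "'x::euclidean_space \<Rightarrow> 'u::euclidean_space \<Rightarrow> 'x"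
    and g :: "'x \<Rightarrow> 'y::real_normed_vector \<Rightarrow> 'x"
    and \<rho> a0 a1 K2 K3 K4 K5 :: real and L1 L2 :: nat +
  fixes c :: "'x \<Rightarrow> 'u \<Rightarrow> real" and h :: "'x \<Rightarrow> real" and K6 K7 :: real and L3 :: nat
  assumes K67_nonneg: "K6 \<ge> 0" "K7 \<ge> 0"
    and c_growth: "\<And>x v. norm v \<le> \<rho> \<Longrightarrow> \<bar>c x v\<bar> \<le> K6 + K7 * norm x ^ L3"
    and h_growth: "\<And>x. \<bar>h x\<bar> \<le> K6 + K7 * norm x ^ L3"
begin

lemma costs_poly_bound:
  assumes T: "T \<ge> 1"
  obtains B P where "\<And>i. i \<in> {1..T+1} \<Longrightarrow> B i > 0"
    and "\<And>u y xs i t. u \<in> admissible_controls T \<rho> \<Longrightarrow> hybrid_trajectory f g T x0 u y xs \<Longrightarrow>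
      i \<in> {1..T} \<Longrightarrow> t \<in> {real i - 1..real i} \<Longrightarrow>
      \<bar>c (xs i t) (u t)\<bar> \<le> B i * (1 + (\<Sum>m=1..i-1. norm (y m))) ^ P i"
    and "\<And>u y xs. u \<in> admissible_controls T \<rho> \<Longrightarrow> hybrid_trajectory f g T x0 u y xs \<Longrightarrow>
      \<bar>h (g (xs T (real T)) (y T))\<bar> \<le> B (T+1) * (1 + (\<Sum>m=1..T. norm (y m))) ^ P (T+1)"
proof -
  obtain C D where C: "\<And>i. i \<in> {1..T+1} \<Longrightarrow> C i \<ge> 0"
    and init: "\<And>i u y xs. i \<in> {1..T+1} \<Longrightarrow> u \<in> admissible_controls T \<rho> \<Longrightarrow>
      hybrid_trajectory f g T x0 u y xs \<Longrightarrow>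
      norm (hybrid_init g x0 y xs i) \<le> C i * (1 + (\<Sum>m=1..i-1. norm (y m))) ^ D i"
    by (rule init_poly_bounds[of T x0]) blast
  (* For i <= T, Z i * R y i ^ D i bounds the whole arc x_i (by arc_poly_bound); for i = T + 1
     it bounds the state after the final jump. *)
  define Z where "Z i = (if i = T + 1 then C i else exp a1 * (C i + a0))" for i
  define R where "R y i = 1 + (\<Sum>m=1..i-1. norm ((y :: nat \<Rightarrow> 'y) m))" for y i
  define B where "B i = K6 + K7 * Z i ^ L3 + 1" for i
  have Z: "Z i \<ge> 0" if "i \<in> {1..T+1}" for i
    using C[OF that] a0_nonneg by (auto simp: Z_def)
  have B: "B i > 0" if "i \<in> {1..T+1}" for i
  proof -
    have "K7 * Z i ^ L3 \<ge> 0" using K67_nonneg Z[OF that] by simp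
    then show ?thesis using K67_nonneg by (simp add: B_def)
  qed
  have R: "R y i ^ D i \<ge> 1" for y i by (simp add: R_def sum_nonneg)
  have cost_le: "K6 + K7 * norm x ^ L3 \<le> B i * R y i ^ (D i * L3)"
    if "i \<in> {1..T+1}" "norm x \<le> Z i * R y i ^ D i" for i y and x :: 'x
    using growth_bound_le_scaled_power[OF K67_nonneg norm_ge_zero that(2) Z[OF that(1)] R]
    by (simp add: B_def power_mult)
  have running: "\<bar>c (xs i t) (u t)\<bar> \<le> B i * R y i ^ (D i * L3)"
    if u: "u \<in> admissible_controls T \<rho>" and traj: "hybrid_trajectory f g T x0 u y xs"
      and i: "i \<in> {1..T}" and t: "t \<in> {real i - 1..real i}" for u y xs i t
  proof -
    have "norm (u t) \<le> \<rho>" using u i t by (auto simp: admissible_controls_def)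
    then have "\<bar>c (xs i t) (u t)\<bar> \<le> K6 + K7 * norm (xs i t) ^ L3" by (rule c_growth)
    also have "\<dots> \<le> B i * R y i ^ (D i * L3)"
      using i init[OF _ u traj, of i] R[of y i]
      by (intro cost_le) (auto simp: Z_def R_def intro: arc_poly_bound[OF u traj i t])
    finally show ?thesis .
  qed
  have terminal: "\<bar>h (g (xs T (real T)) (y T))\<bar> \<le> B (T+1) * R y (T+1) ^ (D (T+1) * L3)"
    if u: "u \<in> admissible_controls T \<rho>" and traj: "hybrid_trajectory f g T x0 u y xs" for u y xs
  proof -
    have "g (xs T (real T)) (y T) = hybrid_init g x0 y xs (T + 1)"
      using T by (simp add: hybrid_init_def)
    then have "\<bar>h (g (xs T (real T)) (y T))\<bar> \<le> K6 + K7 * norm (hybrid_init g x0 y xs (T + 1)) ^ L3"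
      by (simp add: h_growth)
    also have "\<dots> \<le> B (T+1) * R y (T+1) ^ (D (T+1) * L3)"
      using init[OF _ u traj, of "T+1"] by (intro cost_le) (auto simp: Z_def R_def)
    finally show ?thesis .
  qed
  show ?thesis
    by (rule that[of B "\<lambda>i. D i * L3"]) (use B running terminal in \<open>auto simp: R_def\<close>)
qed

lemma costs_monomial_bound:
  assumes T_pos: "T \<ge> 1"
  shows "\<exists>(\<alpha>1::real) (K :: nat \<Rightarrow> nat list set) (\<alpha> :: nat \<Rightarrow> nat list \<Rightarrow> real).
     \<alpha>1 > 0 \<and>
     (\<forall>i\<in>{2..T+1}. finite (K i) \<and> (\<forall>js\<in>K i. length js = i - 1 \<and> \<alpha> i js > 0)) \<and>
     (\<forall>u \<in> admissible_controls T \<rho>. \<forall>(y :: nat \<Rightarrow> 'y) (xs :: nat \<Rightarrow> real \<Rightarrow> 'x).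
        hybrid_trajectory f g T x0 u y xs \<longrightarrow>
          (\<forall>t\<in>{0..1}. \<bar>c (xs 1 t) (u t)\<bar> \<le> \<alpha>1) \<and>
          (\<forall>i\<in>{2..T}. \<forall>t\<in>{real i - 1..real i}.
             \<bar>c (xs i t) (u t)\<bar> \<le>
               (\<Sum>js\<in>K i. \<alpha> i js * (\<Prod>m=1..i-1. norm (y m) ^ (js ! (m - 1))))) \<and>
          \<bar>h (g (xs T (real T)) (y T))\<bar> \<le>
               (\<Sum>js\<in>K (T+1). \<alpha> (T+1) js * (\<Prod>m=1..T. norm (y m) ^ (js ! (m - 1)))))"
proof -
  obtain B P where B: "\<And>i. i \<in> {1..T+1} \<Longrightarrow> B i > 0"
    and running: "\<And>u y xs i t. u \<in> admissible_controls T \<rho> \<Longrightarrow> hybrid_trajectory f g T x0 u y xs \<Longrightarrow>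
      i \<in> {1..T} \<Longrightarrow> t \<in> {real i - 1..real i} \<Longrightarrow>
      \<bar>c (xs i t) (u t)\<bar> \<le> B i * (1 + (\<Sum>m=1..i-1. norm (y m))) ^ P i"
    and terminal: "\<And>u y xs. u \<in> admissible_controls T \<rho> \<Longrightarrow> hybrid_trajectory f g T x0 u y xs \<Longrightarrow>
      \<bar>h (g (xs T (real T)) (y T))\<bar> \<le> B (T+1) * (1 + (\<Sum>m=1..T. norm (y m))) ^ P (T+1)"
    by (rule costs_poly_bound[OF T_pos, of x0]) blast
  have monomials: "B i * (1 + (\<Sum>m=1..n. norm (y m))) ^ P i \<le>
      (\<Sum>js\<in>single_power_exponents n (P i). B i * (real n + 1) ^ P i * (\<Prod>m=1..n. norm (y m) ^ (js ! (m - 1))))"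
    if "i \<in> {1..T+1}" for i n and y :: "nat \<Rightarrow> 'y"
    using B[OF that] by (intro power_one_plus_sum_le_monomials) auto
  show ?thesis
  proof (intro exI[of _ "B 1"] exI[of _ "\<lambda>i. single_power_exponents (i - 1) (P i)"]
      exI[of _ "\<lambda>i js. B i * (real (i - 1) + 1) ^ P i"] conjI ballI allI impI)
    show "B 1 > 0" using B T_pos by simp
  next
    fix i js assume i: "i \<in> {2..T+1}"
    then have "B i > 0" using B by auto
    with i show "finite (single_power_exponents (i - 1) (P i))"
      and "js \<in> single_power_exponents (i - 1) (P i) \<Longrightarrow> length js = i - 1"
      and "B i * (real (i - 1) + 1) ^ P i > 0"
      by (simp_all add: finite_single_power_exponents length_single_power_exponents)
  next
    fix u y xs t
    assume "u \<in> admissible_controls T \<rho>" "hybrid_trajectory f g T x0 u y xs" "t \<in> {0..1::real}"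
    then show "\<bar>c (xs 1 t) (u t)\<bar> \<le> B 1"
      using running[of u y xs 1 t] T_pos by simp
  next
    fix u y xs i t
    assume "u \<in> admissible_controls T \<rho>" "hybrid_trajectory f g T x0 u y xs"
      and "i \<in> {2..T}" "t \<in> {real i - 1..real i}"
    then show "\<bar>c (xs i t) (u t)\<bar> \<le> (\<Sum>js\<in>single_power_exponents (i - 1) (P i).
        B i * (real (i - 1) + 1) ^ P i * (\<Prod>m=1..i-1. norm (y m) ^ (js ! (m - 1))))"
      using order_trans[OF running monomials[where i = i and n = "i - 1" and y = y]] by simp
  next
    fix u y xs
    assume "u \<in> admissible_controls T \<rho>" "hybrid_trajectory f g T x0 u y xs"
    then show "\<bar>h (g (xs T (real T)) (y T))\<bar> \<le> (\<Sum>js\<in>single_power_exponents (T + 1 - 1) (P (T + 1)).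
        B (T + 1) * (real (T + 1 - 1) + 1) ^ P (T + 1) * (\<Prod>m=1..T. norm (y m) ^ (js ! (m - 1))))"
      using order_trans[OF terminal monomials[where i = "T + 1" and n = T and y = y]] by simp
  qed
qed

end

theorem proposition7:
  fixes f :: "'x::euclidean_space \<Rightarrow> 'u::euclidean_space \<Rightarrow> 'x"
    and g :: "'x \<Rightarrow> 'y::euclidean_space \<Rightarrow> 'x"
    and c :: "'x \<Rightarrow> 'u \<Rightarrow> real"
    and h :: "'x \<Rightarrow> real"
    and T :: nat and \<rho> :: real and x0 :: 'x
    and K1 K2 K3 K4 K5 K6 K7 :: real and L1 L2 L3 :: nat
  assumes T_pos: "T \<ge> 1"
    and rho_pos: "\<rho> > 0"
    and f_C1: "\<exists>F'. (\<forall>z. ((\<lambda>(x, v). f x v) has_derivative blinfun_apply (F' z)) (at z))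
                     \<and> continuous_on UNIV F'"
    and K1: "K1 \<ge> 1"
    and f_lip: "\<And>x' x'' u' u''. norm u' \<le> \<rho> \<Longrightarrow> norm u'' \<le> \<rho> \<Longrightarrow>
                 norm (f x' u' - f x'' u'') \<le> K1 * (norm (x' - x'') + norm (u' - u''))"
    and g_cont: "continuous_on UNIV (\<lambda>(x, y). g x y)"
    and K2345: "K2 \<ge> 0" "K3 \<ge> 0" "K4 \<ge> 0" "K5 \<ge> 0"
    and L12: "L1 \<ge> 1" "L2 \<ge> 1"
    and g_bound: "\<exists>G. \<forall>x y. ((\<lambda>x. g x y) has_derivative blinfun_apply (G x y)) (at x)
        \<and> norm (g x y) \<le> K2 + K3 * norm x ^ L1 + K4 * norm y ^ L2 + K5 * norm x ^ L1 * norm y ^ L2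
        \<and> norm (G x y) \<le> K2 + K3 * norm x ^ L1 + K4 * norm y ^ L2 + K5 * norm x ^ L1 * norm y ^ L2"
    and c_cont: "continuous_on UNIV (\<lambda>(x, v). c x v)"
    and c_C1: "\<exists>C. \<forall>v. (\<forall>x. ((\<lambda>x. c x v) has_derivative blinfun_apply (C x v)) (at x))
                      \<and> continuous_on UNIV (\<lambda>x. C x v)"
    and h_diff: "\<exists>H. \<forall>x. (h has_derivative blinfun_apply (H x)) (at x)
                      \<and> norm (H x) \<le> K6 + K7 * norm x ^ L3"
    and K67: "K6 \<ge> 0" "K7 \<ge> 0" and L3: "L3 \<ge> 1"
    and c_bound: "\<exists>C. \<forall>x v. norm v \<le> \<rho> \<longrightarrow>
        ((\<lambda>x. c x v) has_derivative blinfun_apply (C x v)) (at x)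
        \<and> \<bar>c x v\<bar> \<le> K6 + K7 * norm x ^ L3 \<and> norm (C x v) \<le> K6 + K7 * norm x ^ L3"
    and h_bound: "\<And>x. \<bar>h x\<bar> \<le> K6 + K7 * norm x ^ L3"
  shows "\<exists>(\<alpha>1::real) (K :: nat \<Rightarrow> nat list set) (\<alpha> :: nat \<Rightarrow> nat list \<Rightarrow> real).
     \<alpha>1 > 0 \<and>
     (\<forall>i\<in>{2..T+1}. finite (K i) \<and> (\<forall>js\<in>K i. length js = i - 1 \<and> \<alpha> i js > 0)) \<and>
     (\<forall>u \<in> admissible_controls T \<rho>. \<forall>(y :: nat \<Rightarrow> 'y) (xs :: nat \<Rightarrow> real \<Rightarrow> 'x).
        hybrid_trajectory f g T x0 u y xs \<longrightarrow>
          (\<forall>t\<in>{0..1}. \<bar>c (xs 1 t) (u t)\<bar> \<le> \<alpha>1) \<and>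
          (\<forall>i\<in>{2..T}. \<forall>t\<in>{real i - 1..real i}.
             \<bar>c (xs i t) (u t)\<bar> \<le>
               (\<Sum>js\<in>K i. \<alpha> i js * (\<Prod>m=1..i-1. norm (y m) ^ (js ! (m - 1))))) \<and>
          \<bar>h (g (xs T (real T)) (y T))\<bar> \<le>
               (\<Sum>js\<in>K (T+1). \<alpha> (T+1) js * (\<Prod>m=1..T. norm (y m) ^ (js ! (m - 1)))))"
proof -
  (* Only the growth bounds enter. *)
  have K1_nonneg: "K1 \<ge> 0" using K1 by simp
  interpret hybrid_cost_growth f g \<rho> "norm (f 0 0) + K1 * \<rho>" K1 K2 K3 K4 K5 L1 L2 c h K6 K7 L3
  proof
    show "norm (f x v) \<le> norm (f 0 0) + K1 * \<rho> + K1 * norm x" if "norm v \<le> \<rho>" for x v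
      using lipschitz_imp_linear_growth[OF f_lip K1_nonneg _ that] rho_pos by simp
    show "\<And>x w. norm (g x w) \<le> K2 + K3 * norm x ^ L1 + K4 * norm w ^ L2 + K5 * norm x ^ L1 * norm w ^ L2"
      using g_bound by blast
    show "\<And>x v. norm v \<le> \<rho> \<Longrightarrow> \<bar>c x v\<bar> \<le> K6 + K7 * norm x ^ L3"
      using c_bound by blast
  qed (use K1_nonneg rho_pos K2345 K67 h_bound in auto)
  show ?thesis by (rule costs_monomial_bound[OF T_pos])
qed

end
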